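(* Let $d\in\mathbb{Z}^+$ and $e\in\{1,\dots,d-1\}$. For every $B\in\mathcal{N}_d(\mathbb{R}^2)$, \[ |\mathcal{C}_{d,e}(B)|<2^{2^{d+2}}. \]
   Context: For $k\in\mathbb{Z}^+$, a curve of degree $k$ is the zero set in $\mathbb{R}^2$ of a polynomial in $\mathbb{R}[x,y]$ of degree exactly $k$; $\mathcal{C}_k$ is the family of such curves. For $k\in\mathbb{Z}^+$ let $I_k=\{(i,j)\in\mathbb{Z}_{\ge 0}^2: 1\le i+j\le k\}$ and $\psi_k:\mathbb{R}^2\to\mathbb{R}^{\binom{k+2}{2}-1}$, $\psi_k(a_1,a_2)=(a_1^ia_2^j)_{(i,j)\in I_k}$; $\dim S$ is the dimension of the affine hull of $S$ ($\dim\emptyset=-1$). For $A\subseteq\mathbb{R}^2$, $\mathcal{N}_d(A)$ is the family of $B\subseteq A$ with $|B|=\binom{d+2}{2}-3$ such that: (a) $\dim\psi_d(B)=\binom{d+2}{2}-4$; (b) for all $e\in\{1,\dots,d-1\}$ and $C\in\mathcal{C}_e$, $|B\cap C|<\binom{d+2}{2}-\binom{d-e+2}{2}$; (c) for all $e\in\{1,\dots,d-1\}$ and $C\in\mathcal{C}_e$ with $|B\cap C|=\binom{d+2}{2}-\binom{d-e+2}{2}-1$, $\dim\psi_{d-e}(B\setminus C)=\binom{d-e+2}{2}-3$; (d) for all $e\in\{1,\dots,d-1\}$ and $C\in\mathcal{C}_e$ with $|B\cap C|<\binom{d+2}{2}-\binom{d-e+2}{2}-1$, $\dim\psi_{d-e}(B\setminus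 C)>\binom{d-e+2}{2}-3$. For $B\subseteq\mathbb{R}^2$, $\mathcal{C}_{d,e}(B):=\{C\in\mathcal{C}_e: |C\cap B|=\binom{d+2}{2}-\binom{d-e+2}{2}-1\}$. *)

theory Defs
  imports "HOL-Analysis.Analysis" "HOL-Library.Function_Algebras"
begin

definition peval :: "nat \<Rightarrow> (nat \<Rightarrow> nat \<Rightarrow> real) \<Rightarrow> real \<times> real \<Rightarrow> real" where
  "peval k c p = (\<Sum>i\<le>k. \<Sum>j\<le>k - i. c i j * fst p ^ i * snd p ^ j)"

definition has_degree :: "nat \<Rightarrow> (nat \<Rightarrow> nat \<Rightarrow> real) \<Rightarrow> bool" where
  "has_degree k c \<longleftrightarrow> (\<forall>i j. k < i + j \<longrightarrow> c i j = 0) \<and> (\<exists>i j. i + j = k \<and> c i j \<noteq> 0)"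

definition curves :: "nat \<Rightarrow> (real \<times> real) set set" where
  "curves k = {{p. peval k c p = 0} | c. has_degree k c}"

definition Ik :: "nat \<Rightarrow> (nat \<times> nat) set" where
  "Ik k = {(i, j). 1 \<le> i + j \<and> i + j \<le> k}"

definition psi :: "nat \<Rightarrow> real \<times> real \<Rightarrow> (nat \<times> nat \<Rightarrow> real)" where
  "psi k a = (\<lambda>(i, j). if (i, j) \<in> Ik k then fst a ^ i * snd a ^ j else 0)"

definition affdim :: "(nat \<times> nat \<Rightarrow> real) set \<Rightarrow> int" where
  "affdim S = (if S = {} then -1
     else int (vector_space.dim (\<lambda>r f. \<lambda>x. r * f x) {x - y | x y. x \<in> S \<and> y \<in> S}))"

definition Nd :: "nat \<Rightarrow> (real \<times> real) set \<Rightarrow> (real \<times> real) set set" where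
  "Nd d A = {B. B \<subseteq> A \<and> finite B \<and> card B = (d + 2 choose 2) - 3
     \<and> affdim (psi d ` B) = int (d + 2 choose 2) - 4
     \<and> (\<forall>e \<in> {1..d - 1}. \<forall>C \<in> curves e.
          card (B \<inter> C) < (d + 2 choose 2) - (d - e + 2 choose 2))
     \<and> (\<forall>e \<in> {1..d - 1}. \<forall>C \<in> curves e.
          card (B \<inter> C) = (d + 2 choose 2) - (d - e + 2 choose 2) - 1 \<longrightarrow>
          affdim (psi (d - e) ` (B - C)) = int (d - e + 2 choose 2) - 3)
     \<and> (\<forall>e \<in> {1..d - 1}. \<forall>C \<in> curves e.
          card (B \<inter> C) < (d + 2 choose 2) - (d - e + 2 choose 2) - 1 \<longrightarrow>
          affdim (psi (d - e) ` (B - C)) > int (d - e + 2 choose 2) - 3)}"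

definition Cde :: "nat \<Rightarrow> nat \<Rightarrow> (real \<times> real) set \<Rightarrow> (real \<times> real) set set" where
  "Cde d e B = {C \<in> curves e. card (C \<inter> B) = (d + 2 choose 2) - (d - e + 2 choose 2) - 1}"

end

theory Submission
  imports Defs
begin

text \<open>A curve \<open>C \<in> Cde d e B\<close> is determined by its trace \<open>C \<inter> B\<close>. If two distinct such
  curves had the same trace \<open>S\<close>, take \<open>p \<in> B\<close> off the first one: the combination of their
  equations that vanishes at \<open>p\<close> is not identically zero, so it defines a curve of some degree
  \<open>e' \<le> e\<close> through \<open>S\<close> and \<open>p\<close>, i.e. through \<open>|S| + 1\<close> points of \<open>B\<close>, which condition (b)
  forbids. Hence \<open>|Cde d e B| \<le> 2^|B|\<close>, and \<open>|B| < (d+2 choose 2) \<le> 2^(d+2)\<close>.\<close>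

lemma peval_eq_sum_triangle:
  "peval k c p = (\<Sum>(i, j)\<in>{(i, j). i + j \<le> k}. c i j * fst p ^ i * snd p ^ j)"
proof -
  have "Sigma {..k} (\<lambda>i. {..k - i}) = {(i, j). i + j \<le> k}" by auto
  then show ?thesis
    unfolding peval_def by (subst sum.Sigma) auto
qed

lemma peval_degree_mono:
  assumes "\<forall>i j. k < i + j \<longrightarrow> c i j = 0" and "k \<le> m"
  shows "peval m c p = peval k c p"
  unfolding peval_eq_sum_triangle
proof (rule sum.mono_neutral_right)
  show "finite {(i, j). i + j \<le> m}"
    by (rule finite_subset[of _ "{..m} \<times> {..m}"]) auto
  show "{(i, j). i + j \<le> k} \<subseteq> {(i, j). i + j \<le> m}" using assms(2) by auto
  have support: "i + j \<le> k" if "c i j \<noteq> 0" for i j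
    using assms(1) that leI by blast
  show "\<forall>ij\<in>{(i, j). i + j \<le> m} - {(i, j). i + j \<le> k}.
      (case ij of (i, j) \<Rightarrow> c i j * fst p ^ i * snd p ^ j) = 0"
    by (auto dest: support)
qed

lemma peval_lincomb:
  "peval k (\<lambda>i j. a * c1 i j + b * c2 i j) p = a * peval k c1 p + b * peval k c2 p"
  unfolding peval_def by (simp add: sum.distrib sum_distrib_left algebra_simps)

lemma peval_degree_0_nonzero:
  assumes "has_degree 0 c"
  shows "peval 0 c p \<noteq> 0"
  using assms by (simp add: peval_def has_degree_def)

lemma exists_exact_degree:
  assumes supp: "\<forall>i j. e < i + j \<longrightarrow> h i j = 0" and nonzero: "\<exists>i j. h i j \<noteq> 0"
  obtains e' where "e' \<le> e" and "has_degree e' h" and "\<And>p. peval e h p = peval e' h p"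
proof -
  define M where "M = {i + j | i j. h i j \<noteq> 0}"
  have in_M: "i + j \<in> M" if "h i j \<noteq> 0" for i j
    unfolding M_def using that by blast
  have "M \<subseteq> {..e}"
    unfolding M_def using supp leI by fastforce
  then have "finite M" by (rule finite_subset) simp
  moreover have "M \<noteq> {}" using nonzero in_M by blast
  ultimately have "Max M \<in> M" by (rule Max_in)
  have vanish: "\<forall>i j. Max M < i + j \<longrightarrow> h i j = 0"
    using in_M Max_ge[OF \<open>finite M\<close>] leD by blast
  obtain i j where "Max M = i + j" and "h i j \<noteq> 0"
    using \<open>Max M \<in> M\<close> unfolding M_def by blast
  with vanish have "has_degree (Max M) h"
    unfolding has_degree_def by auto
  moreover have "Max M \<le> e" using \<open>Max M \<in> M\<close> \<open>M \<subseteq> {..e}\<close> by auto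
  moreover have "peval e h p = peval (Max M) h p" for p
    using vanish \<open>Max M \<le> e\<close> by (rule peval_degree_mono)
  ultimately show ?thesis using that by blast
qed

lemma curve_through_meet_and_point:
  assumes C1: "C1 \<in> curves e" and C2: "C2 \<in> curves e"
    and distinct: "C1 \<noteq> C2" and p: "p \<notin> C1"
  obtains e' Z where "1 \<le> e'" and "e' \<le> e" and "Z \<in> curves e'"
    and "p \<in> Z" and "C1 \<inter> C2 \<subseteq> Z"
proof -
  obtain c1 where c1: "C1 = {q. peval e c1 q = 0}" "has_degree e c1"
    using C1 unfolding curves_def by auto
  obtain c2 where c2: "C2 = {q. peval e c2 q = 0}" "has_degree e c2"
    using C2 unfolding curves_def by auto
  define a where "a = peval e c2 p"
  define b where "b = - peval e c1 p"
  define h where "h = (\<lambda>i j. a * c1 i j + b * c2 i j)"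
  have h_eval: "peval e h q = a * peval e c1 q + b * peval e c2 q" for q
    unfolding h_def by (rule peval_lincomb)
  have "b \<noteq> 0" using p c1 by (simp add: b_def)
  have supp: "\<forall>i j. e < i + j \<longrightarrow> h i j = 0"
    using c1(2) c2(2) by (simp add: has_degree_def h_def)
  have "\<exists>i j. h i j \<noteq> 0"
  proof (rule ccontr)
    assume "\<not> (\<exists>i j. h i j \<noteq> 0)"
    then have h0: "h i j = 0" for i j by simp
    show False
    proof (cases "a = 0")
      case True
      then have "c2 i j = 0" for i j
        using h0[of i j] \<open>b \<noteq> 0\<close> by (simp add: h_def)
      then show False using c2(2) by (simp add: has_degree_def)
    next
      case False
      have "a * peval e c1 q = - b * peval e c2 q" for q
        using h_eval[of q] h0 by (simp add: peval_def)
      then have "peval e c1 q = 0 \<longleftrightarrow> peval e c2 q = 0" for q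
        using False \<open>b \<noteq> 0\<close> by (metis mult_eq_0_iff neg_0_equal_iff_equal)
      then show False using distinct c1(1) c2(1) by auto
    qed
  qed
  with supp obtain e' where "e' \<le> e" and deg: "has_degree e' h"
    and h_eq: "\<And>q. peval e h q = peval e' h q"
    using exists_exact_degree by blast
  have "peval e' h p = 0" using h_eq[of p] h_eval[of p] by (simp add: a_def b_def)
  have "e' \<noteq> 0"
  proof
    assume "e' = 0"
    with deg \<open>peval e' h p = 0\<close> show False using peval_degree_0_nonzero by blast
  qed
  show ?thesis
  proof (rule that)
    show "1 \<le> e'" using \<open>e' \<noteq> 0\<close> by simp
    show "e' \<le> e" by fact
    show "{q. peval e' h q = 0} \<in> curves e'" using deg by (auto simp: curves_def)
    show "p \<in> {q. peval e' h q = 0}" using \<open>peval e' h p = 0\<close> by simp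
    show "C1 \<inter> C2 \<subseteq> {q. peval e' h q = 0}" using c1 c2 h_eval h_eq by auto
  qed
qed

lemma Nd_finite_card:
  assumes "B \<in> Nd d A"
  shows "finite B" and "card B = (d + 2 choose 2) - 3"
  using assms by (simp_all add: Nd_def)

lemma Nd_curve_card_less:
  assumes "B \<in> Nd d A" and "1 \<le> e" and "e \<le> d - 1" and "C \<in> curves e"
  shows "card (B \<inter> C) < (d + 2 choose 2) - (d - e + 2 choose 2)"
  using assms unfolding Nd_def by simp

lemma inj_on_Cde_trace:
  assumes e: "1 \<le> e" "e \<le> d - 1" and B: "B \<in> Nd d UNIV"
  shows "inj_on (\<lambda>C. C \<inter> B) (Cde d e B)"
proof (rule inj_onI, rule ccontr)
  fix C1 C2
  assume C1: "C1 \<in> Cde d e B" and C2: "C2 \<in> Cde d e B"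
    and same_trace: "C1 \<inter> B = C2 \<inter> B" and "C1 \<noteq> C2"
  define S where "S = C1 \<inter> B"
  have "finite B" and card_B: "card B = (d + 2 choose 2) - 3"
    using B by (rule Nd_finite_card)+
  have card_S: "card S = (d + 2 choose 2) - (d - e + 2 choose 2) - 1"
    using C1 by (simp add: Cde_def S_def)
  have "(3::nat) choose 2 = 3" by (simp add: numeral_eq_Suc)
  then have "3 \<le> (d - e + 2 choose 2)"
    using binomial_right_mono[of 3 "d - e + 2" 2] e by simp
  moreover have "(d - e + 2 choose 2) \<le> (d + 1 choose 2)"
    using e by (intro binomial_right_mono) simp
  moreover have "(d + 2 choose 2) = (d + 1) + (d + 1 choose 2)"
    using binomial_Suc_Suc[of "d + 1" 1] by (simp add: numeral_2_eq_2)
  ultimately have "card S \<noteq> card B" using card_S card_B by linarith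
  then have "S \<noteq> B" by auto
  then obtain p where "p \<in> B" and "p \<notin> S"
    unfolding S_def by blast
  then have "p \<notin> C1" by (simp add: S_def)
  moreover have "C1 \<in> curves e" and "C2 \<in> curves e"
    using C1 C2 by (simp_all add: Cde_def)
  ultimately obtain e' Z where e': "1 \<le> e'" "e' \<le> e" and Z: "Z \<in> curves e'"
    and "p \<in> Z" and "C1 \<inter> C2 \<subseteq> Z"
    using \<open>C1 \<noteq> C2\<close> curve_through_meet_and_point by blast
  have "insert p S \<subseteq> B \<inter> Z"
    using \<open>p \<in> B\<close> \<open>p \<in> Z\<close> \<open>C1 \<inter> C2 \<subseteq> Z\<close> same_trace by (auto simp: S_def)
  moreover have "finite S" using \<open>finite B\<close> by (simp add: S_def)
  ultimately have "card S + 1 \<le> card (B \<inter> Z)"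
    using \<open>finite B\<close> \<open>p \<notin> S\<close> card_mono[of "B \<inter> Z" "insert p S"] by simp
  moreover have "card (B \<inter> Z) < (d + 2 choose 2) - (d - e' + 2 choose 2)"
    using B e' e Z by (intro Nd_curve_card_less) simp_all
  moreover have "(d - e + 2 choose 2) \<le> (d - e' + 2 choose 2)"
    using e' by (intro binomial_right_mono) simp
  ultimately show False using card_S by linarith
qed

theorem lemma29:
  fixes d e :: nat and B :: "(real \<times> real) set"
  assumes "0 < d" and "1 \<le> e" and "e \<le> d - 1"
    and "B \<in> Nd d UNIV"
  shows "finite (Cde d e B) \<and> card (Cde d e B) < 2 ^ (2 ^ (d + 2))"
proof -
  have "finite B" and card_B: "card B = (d + 2 choose 2) - 3"
    using assms(4) by (rule Nd_finite_card)+
  have inj: "inj_on (\<lambda>C. C \<inter> B) (Cde d e B)"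
    using assms(2-4) by (rule inj_on_Cde_trace)
  have into_Pow: "(\<lambda>C. C \<inter> B) ` Cde d e B \<subseteq> Pow B" by auto
  have "card (Cde d e B) \<le> card (Pow B)"
    using inj into_Pow \<open>finite B\<close> by (intro card_inj_on_le) auto
  also have "\<dots> = 2 ^ card B" using \<open>finite B\<close> by (rule card_Pow)
  also have "\<dots> < 2 ^ (2 ^ (d + 2))"
  proof -
    have "(0::nat) < 2 ^ (d + 2)" by simp
    then have "card B < 2 ^ (d + 2)"
      using card_B binomial_le_pow2[of "d + 2" 2] by linarith
    then show ?thesis by simp
  qed
  finally show ?thesis
    using inj_on_finite[OF inj into_Pow] \<open>finite B\<close> by simp
qed

end
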